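(* For every $n \geq 3$ and every $i \in \{1,\ldots,n\}$, the number of arrangements in $\{D_n\}$ whose first entry is $i$ is exactly $Der_{n-1}$.
   Context: A linear arrangement of $\{1,\ldots,n\}$ is a sequence $a_1\cdots a_n$ in which each of $1,\ldots,n$ appears exactly once. It contains the pattern $ij$ if $a_t=i$ and $a_{t+1}=j$ for some $t$; otherwise it avoids it. $\{D_n\}$ is the set of linear arrangements of $\{1,\ldots,n\}$ avoiding all of the patterns $12, 23, \ldots, (n-1)n, n1$. $Der_{m}$ is the number of permutations of $\{1,\ldots,m\}$ with no fixed point. *)

theory Defs
  imports "HOL-Combinatorics.Permutations"
begin

definition arrangements :: "nat \<Rightarrow> nat list set" where
  "arrangements n = {xs. distinct xs \<and> set xs = {1..n}}"

definition contains_pattern :: "nat list \<Rightarrow> nat \<Rightarrow> nat \<Rightarrow> bool" where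
  "contains_pattern xs i j \<longleftrightarrow> (\<exists>t. Suc t < length xs \<and> xs ! t = i \<and> xs ! Suc t = j)"

definition D :: "nat \<Rightarrow> nat list set" where
  "D n = {xs \<in> arrangements n.
            (\<forall>k\<in>{1..<n}. \<not> contains_pattern xs k (Suc k)) \<and> \<not> contains_pattern xs n 1}"

definition Der :: "nat \<Rightarrow> nat" where
  "Der m = card {p. p permutes {1..m} \<and> (\<forall>x\<in>{1..m}. p x \<noteq> x)}"

end

theory Submission
  imports Defs "HOL-Combinatorics.Multiset_Permutations"
begin

text \<open>An arrangement in D_n starting with i is i followed by an arrangement of the other
  n - 1 numbers that avoids the n - 2 cyclic successions not involving i and does not start
  with the successor of i. For a set F of forbidden successions forming vertex-disjoint paths,
  the arrangements avoiding F - {xy} are those avoiding F together with those containing xy,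
  and the latter are the arrangements of one element fewer in which x and y are glued together.
  Hence the number of arrangements of s elements avoiding k such successions is determined by
  the recursion g(s, 0) = s!, g(s, k + 1) = g(s, k) - g(s - 1, k), and a forbidden first entry
  counts as one more forbidden succession. Permutations of s elements without fixed points in a
  given k-set obey the same recursion, so D_n has g(n - 1, n - 1) = Der(n - 1) arrangements
  starting with i.\<close>

lemma card_Collect_split:
  assumes "finite A"
  shows "card {x \<in> A. P x} = card {x \<in> A. P x \<and> Q x} + card {x \<in> A. P x \<and> \<not> Q x}"
proof -
  have "card ({x \<in> A. P x \<and> Q x} \<union> {x \<in> A. P x \<and> \<not> Q x})
      = card {x \<in> A. P x \<and> Q x} + card {x \<in> A. P x \<and> \<not> Q x}"
    by (rule card_Un_disjoint) (use assms in auto)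
  moreover have "{x \<in> A. P x \<and> Q x} \<union> {x \<in> A. P x \<and> \<not> Q x} = {x \<in> A. P x}"
    by blast
  ultimately show ?thesis
    by simp
qed

lemma Cons_in_permutations_of_set_iff:
  "a # ys \<in> permutations_of_set A \<longleftrightarrow> a \<in> A \<and> ys \<in> permutations_of_set (A - {a})"
  by (auto simp: permutations_of_set_def)

lemma card_permutations_of_set_hd:
  assumes "a \<in> A"
  shows "card {xs \<in> permutations_of_set A. xs \<noteq> [] \<and> hd xs = a \<and> P xs}
    = card {ys \<in> permutations_of_set (A - {a}). P (a # ys)}"
proof -
  have "{xs \<in> permutations_of_set A. xs \<noteq> [] \<and> hd xs = a \<and> P xs}
      = (#) a ` {ys \<in> permutations_of_set (A - {a}). P (a # ys)}"
  proof (intro equalityI subsetI)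
    fix xs assume "xs \<in> {xs \<in> permutations_of_set A. xs \<noteq> [] \<and> hd xs = a \<and> P xs}"
    then show "xs \<in> (#) a ` {ys \<in> permutations_of_set (A - {a}). P (a # ys)}"
      by (cases xs) (auto simp: Cons_in_permutations_of_set_iff)
  qed (auto simp: Cons_in_permutations_of_set_iff assms)
  then show ?thesis
    by (simp add: card_image)
qed

fun avoids :: "('a \<times> 'a) set \<Rightarrow> 'a list \<Rightarrow> bool" where
  "avoids F (x # y # zs) \<longleftrightarrow> (x, y) \<notin> F \<and> avoids F (y # zs)"
| "avoids F _ \<longleftrightarrow> True"

lemma avoids_Cons: "avoids F (x # xs) \<longleftrightarrow> (xs \<noteq> [] \<longrightarrow> (x, hd xs) \<notin> F) \<and> avoids F xs"
  by (cases xs) auto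

lemma avoids_conv_nth: "avoids F xs \<longleftrightarrow> (\<forall>t. Suc t < length xs \<longrightarrow> (xs ! t, xs ! Suc t) \<notin> F)"
proof (induction F xs rule: avoids.induct)
  case (1 F x y zs)
  then show ?case by (auto simp: less_Suc_eq_0_disj)
qed auto

lemma contains_pattern_iff_not_avoids: "contains_pattern xs a b \<longleftrightarrow> \<not> avoids {(a, b)} xs"
  by (auto simp: contains_pattern_def avoids_conv_nth)

lemma avoids_empty [simp]: "avoids {} xs"
  by (simp add: avoids_conv_nth)

lemma avoids_iff_singletons: "avoids F xs \<longleftrightarrow> (\<forall>p\<in>F. avoids {p} xs)"
  by (auto simp: avoids_conv_nth)

lemma avoids_Un: "avoids (F \<union> G) xs \<longleftrightarrow> avoids F xs \<and> avoids G xs"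
  by (auto simp: avoids_conv_nth)

lemma avoids_cong:
  assumes "Restr F (set xs) = Restr G (set xs)"
  shows "avoids F xs \<longleftrightarrow> avoids G xs"
  using assms by (auto simp: avoids_conv_nth)

lemma not_avoids_singletonD: "\<not> avoids {(x, y)} xs \<Longrightarrow> x \<in> set xs \<and> y \<in> set xs"
  by (auto simp: avoids_conv_nth)

lemma avoids_Restr: "set xs \<subseteq> T \<Longrightarrow> avoids (Restr F T) xs \<longleftrightarrow> avoids F xs"
  by (rule avoids_cong) auto

fun insert_after :: "'a \<Rightarrow> 'a \<Rightarrow> 'a list \<Rightarrow> 'a list" where
  "insert_after x y [] = []"
| "insert_after x y (z # zs) =
    (if z = x then x # y # insert_after x y zs else z # insert_after x y zs)"

lemma insert_after_absent: "x \<notin> set zs \<Longrightarrow> insert_after x y zs = zs"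
  by (induction zs) auto

lemma insert_after_eq_Nil_iff [simp]: "insert_after x y zs = [] \<longleftrightarrow> zs = []"
  by (cases zs) auto

lemma hd_insert_after: "zs \<noteq> [] \<Longrightarrow> hd (insert_after x y zs) = hd zs"
  by (cases zs) auto

lemma set_insert_after:
  "set (insert_after x y zs) = set zs \<union> (if x \<in> set zs then {y} else {})"
  by (induction zs) auto

lemma distinct_insert_after:
  "distinct zs \<Longrightarrow> y \<notin> set zs \<Longrightarrow> x \<noteq> y \<Longrightarrow> distinct (insert_after x y zs)"
proof (induction zs)
  case (Cons z zs)
  then show ?case
    by (auto simp: set_insert_after)
qed simp

lemma filter_insert_after:
  "y \<notin> set zs \<Longrightarrow> x \<noteq> y \<Longrightarrow> filter (\<lambda>z. z \<noteq> y) (insert_after x y zs) = zs"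
  by (induction zs) auto

lemma not_avoids_insert_after: "x \<in> set zs \<Longrightarrow> \<not> avoids {(x, y)} (insert_after x y zs)"
  by (induction zs) (auto simp: avoids_Cons)

lemma insert_after_filter:
  assumes "distinct xs" "\<not> avoids {(x, y)} xs"
  shows "insert_after x y (filter (\<lambda>z. z \<noteq> y) xs) = xs"
  using assms
proof (induction xs)
  case (Cons a xs)
  show ?case
  proof (cases "a = x")
    case True
    with Cons.prems have "xs \<noteq> [] \<and> hd xs = y \<or> \<not> avoids {(x, y)} xs"
      by (auto simp: avoids_Cons)
    with Cons.prems True obtain xs' where xs: "xs = y # xs'"
      by (cases xs) (auto dest: not_avoids_singletonD)
    with Cons.prems True have "x \<noteq> y" "x \<notin> set xs'" "y \<notin> set xs'" by auto
    then show ?thesis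
      using xs True by (auto simp: insert_after_absent filter_id_conv)
  next
    case False
    with Cons.prems have "\<not> avoids {(x, y)} xs" by (auto simp: avoids_Cons)
    with Cons show ?thesis
      using False by (auto dest: not_avoids_singletonD)
  qed
qed simp

lemma bij_betw_insert_after:
  assumes "x \<in> S" "y \<in> S" "x \<noteq> y"
  shows "bij_betw (insert_after x y) (permutations_of_set (S - {y}))
           {xs \<in> permutations_of_set S. \<not> avoids {(x, y)} xs}"
proof (rule bij_betw_byWitness[where f' = "filter (\<lambda>z. z \<noteq> y)"])
  show "\<forall>zs\<in>permutations_of_set (S - {y}). filter (\<lambda>z. z \<noteq> y) (insert_after x y zs) = zs"
  proof
    fix zs assume "zs \<in> permutations_of_set (S - {y})"
    then have "y \<notin> set zs" by (simp add: permutations_of_set_def)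
    then show "filter (\<lambda>z. z \<noteq> y) (insert_after x y zs) = zs"
      using assms(3) by (rule filter_insert_after)
  qed
  show "\<forall>xs\<in>{xs \<in> permutations_of_set S. \<not> avoids {(x, y)} xs}.
          insert_after x y (filter (\<lambda>z. z \<noteq> y) xs) = xs"
  proof
    fix xs assume "xs \<in> {xs \<in> permutations_of_set S. \<not> avoids {(x, y)} xs}"
    then have "distinct xs" "\<not> avoids {(x, y)} xs" by (simp_all add: permutations_of_set_def)
    then show "insert_after x y (filter (\<lambda>z. z \<noteq> y) xs) = xs"
      by (rule insert_after_filter)
  qed
  show "insert_after x y ` permutations_of_set (S - {y})
          \<subseteq> {xs \<in> permutations_of_set S. \<not> avoids {(x, y)} xs}"
  proof (rule image_subsetI)
    fix zs assume "zs \<in> permutations_of_set (S - {y})"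
    then have zs: "set zs = S - {y}" "distinct zs" by (simp_all add: permutations_of_set_def)
    with assms have x: "x \<in> set zs" and y: "y \<notin> set zs" by auto
    have "set (insert_after x y zs) = S"
      using x zs(1) assms(2) by (auto simp: set_insert_after)
    moreover have "distinct (insert_after x y zs)"
      using zs(2) y assms(3) by (rule distinct_insert_after)
    moreover have "\<not> avoids {(x, y)} (insert_after x y zs)"
      using x by (rule not_avoids_insert_after)
    ultimately show "insert_after x y zs \<in> {xs \<in> permutations_of_set S. \<not> avoids {(x, y)} xs}"
      by (simp add: permutations_of_set_def)
  qed
  show "filter (\<lambda>z. z \<noteq> y) ` {xs \<in> permutations_of_set S. \<not> avoids {(x, y)} xs}
          \<subseteq> permutations_of_set (S - {y})"
  proof (rule image_subsetI)
    fix xs assume "xs \<in> {xs \<in> permutations_of_set S. \<not> avoids {(x, y)} xs}"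
    then have "set xs = S" "distinct xs" by (simp_all add: permutations_of_set_def)
    then show "filter (\<lambda>z. z \<noteq> y) xs \<in> permutations_of_set (S - {y})"
      by (intro permutations_of_setI) auto
  qed
qed

lemma avoids_insert_after:
  assumes "(x, y) \<notin> F" "y \<notin> set zs"
    and "\<And>z b. z \<noteq> y \<Longrightarrow> (z, b) \<in> F' \<longleftrightarrow> (if z = x then (y, b) else (z, b)) \<in> F"
  shows "avoids F (insert_after x y zs) \<longleftrightarrow> avoids F' zs"
  using assms(2)
proof (induction zs)
  case (Cons z zs)
  then show ?case
    using assms(1) assms(3)[of z "hd zs"] by (auto simp: avoids_Cons hd_insert_after)
qed simp

text \<open>F is the set of edges of a family of vertex-disjoint directed paths on S;
  the ranking r rules out cycles.\<close>
definition linear_forest :: "'a set \<Rightarrow> ('a \<times> 'a) set \<Rightarrow> bool" where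
  "linear_forest S F \<longleftrightarrow> finite S \<and> F \<subseteq> S \<times> S \<and> inj_on fst F \<and> inj_on snd F \<and>
     (\<exists>r::'a \<Rightarrow> nat. \<forall>(u, v)\<in>F. r u < r v)"

lemma linear_forest_finite: "linear_forest S F \<Longrightarrow> finite F"
  unfolding linear_forest_def by (meson finite_SigmaI finite_subset)

lemma linear_forest_irrefl: "linear_forest S F \<Longrightarrow> (x, y) \<in> F \<Longrightarrow> x \<noteq> y"
  unfolding linear_forest_def by fastforce

lemma linear_forest_fst_eq:
  "linear_forest S F \<Longrightarrow> (x, y) \<in> F \<Longrightarrow> (x, z) \<in> F \<Longrightarrow> z = y"
  unfolding linear_forest_def by (metis fst_conv inj_onD snd_conv)

lemma linear_forest_snd_eq:
  "linear_forest S F \<Longrightarrow> (x, y) \<in> F \<Longrightarrow> (z, y) \<in> F \<Longrightarrow> z = x"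
  unfolding linear_forest_def by (metis fst_conv inj_onD snd_conv)

lemma linear_forest_subset: "linear_forest S F \<Longrightarrow> G \<subseteq> F \<Longrightarrow> linear_forest S G"
  unfolding linear_forest_def by (blast intro: inj_on_subset)

lemma linear_forest_Restr: "linear_forest S F \<Longrightarrow> T \<subseteq> S \<Longrightarrow> linear_forest T (Restr F T)"
  unfolding linear_forest_def by (blast intro: inj_on_subset finite_subset)

definition contract :: "'a \<Rightarrow> 'a \<Rightarrow> ('a \<times> 'a) set \<Rightarrow> ('a \<times> 'a) set" where
  "contract x y F = (\<lambda>(u, v). (if u = y then x else u, v)) ` (F - {(x, y)})"

context
  fixes S F x y
  assumes forest: "linear_forest S F" and edge: "(x, y) \<in> F"
begin

lemma mem_contract_iff:
  assumes "z \<noteq> y"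
  shows "(z, b) \<in> contract x y F \<longleftrightarrow> (if z = x then (y, b) else (z, b)) \<in> F - {(x, y)}"
proof -
  have "(z, b) \<in> contract x y F \<longleftrightarrow>
      (\<exists>u. (u, b) \<in> F - {(x, y)} \<and> (if u = y then x else u) = z)"
    by (force simp: contract_def)
  also have "\<dots> \<longleftrightarrow> (if z = x then (y, b) else (z, b)) \<in> F - {(x, y)}"
    using assms linear_forest_irrefl[OF forest edge] linear_forest_fst_eq[OF forest edge]
    by (cases "z = x") auto
  finally show ?thesis .
qed

lemma card_contract: "card (contract x y F) = card F - 1"
proof -
  let ?h = "\<lambda>(u, v). (if u = y then x else u, v)"
  have "inj_on (snd \<circ> ?h) (F - {(x, y)})"
    using forest by (auto simp: linear_forest_def comp_def split_beta intro: inj_on_subset)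
  then have "inj_on ?h (F - {(x, y)})"
    by (rule inj_on_imageI2)
  then show ?thesis
    using edge linear_forest_finite[OF forest] by (simp add: contract_def card_image)
qed

lemma contractE:
  assumes "p \<in> contract x y F"
  obtains u v where "(u, v) \<in> F" "(u, v) \<noteq> (x, y)" "v \<noteq> y"
    "p = (if u = y then x else u, v)"
proof -
  from assms obtain u v where uv: "(u, v) \<in> F - {(x, y)}" "p = (if u = y then x else u, v)"
    by (auto simp: contract_def)
  moreover from uv(1) have "v \<noteq> y"
    using linear_forest_snd_eq[OF forest edge] by auto
  ultimately show thesis
    using that by blast
qed

lemma inj_on_fst_contract: "inj_on fst (contract x y F)"
proof (rule inj_onI)
  fix p q assume "p \<in> contract x y F" "q \<in> contract x y F" and eq: "fst p = fst q"
  then obtain u v u' v' where uv: "(u, v) \<in> F" "(u, v) \<noteq> (x, y)"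
    "p = (if u = y then x else u, v)"
    and uv': "(u', v') \<in> F" "(u', v') \<noteq> (x, y)" "q = (if u' = y then x else u', v')"
    by (metis contractE)
  have "u = u'"
    using eq uv uv' linear_forest_fst_eq[OF forest edge] by (auto split: if_splits)
  moreover from this have "v = v'"
    using uv(1) uv'(1) linear_forest_fst_eq[OF forest] by blast
  ultimately show "p = q"
    using uv(3) uv'(3) by simp
qed

lemma inj_on_snd_contract: "inj_on snd (contract x y F)"
proof (rule inj_onI)
  fix p q assume "p \<in> contract x y F" "q \<in> contract x y F" and eq: "snd p = snd q"
  then obtain u v u' v' where uv: "(u, v) \<in> F" "p = (if u = y then x else u, v)"
    and uv': "(u', v') \<in> F" "q = (if u' = y then x else u', v')"
    by (metis contractE)
  then have "v = v'"
    using eq by simp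
  then have "u = u'"
    using uv(1) uv'(1) linear_forest_snd_eq[OF forest] by blast
  then show "p = q"
    using uv(2) uv'(2) \<open>v = v'\<close> by simp
qed

lemma linear_forest_contract: "linear_forest (S - {y}) (contract x y F)"
  unfolding linear_forest_def
proof (intro conjI)
  obtain r :: "'a \<Rightarrow> nat" where r: "\<forall>(u, v)\<in>F. r u < r v"
    and sub: "F \<subseteq> S \<times> S" and fin: "finite S"
    using forest by (auto simp: linear_forest_def)
  have x: "x \<noteq> y" "x \<in> S"
    using linear_forest_irrefl[OF forest edge] edge sub by auto
  show "finite (S - {y})"
    using fin by simp
  show "contract x y F \<subseteq> (S - {y}) \<times> (S - {y})"
  proof
    fix p assume "p \<in> contract x y F"
    then obtain u v where "(u, v) \<in> F" "v \<noteq> y" "p = (if u = y then x else u, v)"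
      by (rule contractE)
    then show "p \<in> (S - {y}) \<times> (S - {y})"
      using sub x by auto
  qed
  show "inj_on fst (contract x y F)" "inj_on snd (contract x y F)"
    by (rule inj_on_fst_contract, rule inj_on_snd_contract)
  show "\<exists>r::'a \<Rightarrow> nat. \<forall>(u, v)\<in>contract x y F. r u < r v"
  proof (intro exI[of _ r] ballI)
    fix p assume "p \<in> contract x y F"
    then obtain u v where uv: "(u, v) \<in> F" "p = (if u = y then x else u, v)"
      by (rule contractE)
    have "r u < r v" "r x < r y"
      using r uv(1) edge by auto
    then show "case p of (u, v) \<Rightarrow> r u < r v"
      using uv(2) by (cases "u = y") auto
  qed
qed

lemma card_avoiding_containing:
  "card {xs \<in> permutations_of_set S. avoids (F - {(x, y)}) xs \<and> \<not> avoids {(x, y)} xs}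
     = card {zs \<in> permutations_of_set (S - {y}). avoids (contract x y F) zs}"
proof -
  have xy: "x \<noteq> y" "x \<in> S" "y \<in> S"
    using linear_forest_irrefl[OF forest edge] edge forest by (auto simp: linear_forest_def)
  have bij: "bij_betw (insert_after x y) {zs \<in> permutations_of_set (S - {y}). avoids (contract x y F) zs}
     {xs \<in> {xs \<in> permutations_of_set S. \<not> avoids {(x, y)} xs}. avoids (F - {(x, y)}) xs}"
  proof (rule bij_betw_Collect[OF bij_betw_insert_after[OF xy(2,3,1)]])
    fix zs assume "zs \<in> permutations_of_set (S - {y})"
    then have "y \<notin> set zs" by (simp add: permutations_of_set_def)
    then show "avoids (F - {(x, y)}) (insert_after x y zs) \<longleftrightarrow> avoids (contract x y F) zs"
      by (intro avoids_insert_after) (simp_all add: mem_contract_iff)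
  qed
  have "{xs \<in> {xs \<in> permutations_of_set S. \<not> avoids {(x, y)} xs}. avoids (F - {(x, y)}) xs}
      = {xs \<in> permutations_of_set S. avoids (F - {(x, y)}) xs \<and> \<not> avoids {(x, y)} xs}"
    by blast
  with bij_betw_same_card[OF bij] show ?thesis
    by simp
qed

end

text \<open>The closed form is ie_count s k = (\<Sum>j\<le>k. (-1)^j (k choose j) (s - j)!), the usual
  inclusion-exclusion count; only the recursion is used.\<close>
fun ie_count :: "nat \<Rightarrow> nat \<Rightarrow> int" where
  "ie_count s 0 = fact s"
| "ie_count s (Suc k) = ie_count s k - ie_count (s - 1) k"

lemma card_avoiding_split:
  assumes "p \<in> F"
  shows "card {xs \<in> permutations_of_set S. avoids (F - {p}) xs}
    = card {xs \<in> permutations_of_set S. avoids F xs}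
      + card {xs \<in> permutations_of_set S. avoids (F - {p}) xs \<and> \<not> avoids {p} xs}"
proof -
  have "avoids (F - {p}) xs \<and> avoids {p} xs \<longleftrightarrow> avoids F xs" for xs
    using avoids_Un[of "F - {p}" "{p}" xs] assms by (simp add: insert_absorb)
  then show ?thesis
    using card_Collect_split[of "permutations_of_set S" "avoids (F - {p})" "avoids {p}"] by simp
qed

theorem card_avoiding:
  assumes "linear_forest S F"
  shows "int (card {xs \<in> permutations_of_set S. avoids F xs}) = ie_count (card S) (card F)"
  using assms
proof (induction "card F" arbitrary: F S)
  case 0
  then have "F = {}"
    using linear_forest_finite[OF "0.prems"] by simp
  with 0 show ?case
    by (simp add: linear_forest_def)
next
  case (Suc k)
  then have "F \<noteq> {}"
    by auto
  then obtain x y where edge: "(x, y) \<in> F"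
    by auto
  have yS: "y \<in> S" "finite S"
    using Suc.prems edge by (auto simp: linear_forest_def)
  have "card (F - {(x, y)}) = k"
    using Suc.hyps(2) edge linear_forest_finite[OF Suc.prems] by simp
  then have without: "int (card {xs \<in> permutations_of_set S. avoids (F - {(x, y)}) xs})
      = ie_count (card S) k"
    using Suc.hyps(1) linear_forest_subset[OF Suc.prems, of "F - {(x, y)}"] by auto
  have "card (contract x y F) = k"
    using card_contract[OF Suc.prems edge] Suc.hyps(2) by simp
  then have glued: "int (card {zs \<in> permutations_of_set (S - {y}). avoids (contract x y F) zs})
      = ie_count (card S - 1) k"
    using Suc.hyps(1) linear_forest_contract[OF Suc.prems edge] yS by fastforce
  show ?case
    using card_avoiding_split[OF edge, of S] card_avoiding_containing[OF Suc.prems edge]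
      without glued Suc.hyps(2)[symmetric] by simp
qed

lemma card_avoiding_split_hd:
  assumes "a \<in> S"
  shows "card {xs \<in> permutations_of_set S. avoids F xs}
    = card {xs \<in> permutations_of_set S. avoids F xs \<and> (xs \<noteq> [] \<longrightarrow> hd xs \<noteq> a)}
      + card {ys \<in> permutations_of_set (S - {a}). avoids F (a # ys)}"
proof -
  have "card {xs \<in> permutations_of_set S. avoids F xs}
      = card {xs \<in> permutations_of_set S. avoids F xs \<and> (xs \<noteq> [] \<longrightarrow> hd xs \<noteq> a)}
        + card {xs \<in> permutations_of_set S. xs \<noteq> [] \<and> hd xs = a \<and> avoids F xs}"
    using card_Collect_split[of "permutations_of_set S" "avoids F" "\<lambda>xs. xs \<noteq> [] \<longrightarrow> hd xs \<noteq> a"]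
    by (simp add: conj_commute conj_left_commute)
  then show ?thesis
    using card_permutations_of_set_hd[OF assms] by simp
qed

lemma Restr_Diff_source:
  assumes "linear_forest S F" "a \<notin> snd ` F" "(a, b) \<in> F"
  shows "Restr F (S - {a}) = F - {(a, b)}"
proof -
  have "u \<noteq> a" if "(u, v) \<in> F - {(a, b)}" for u v
    using that linear_forest_fst_eq[OF assms(1,3)] by blast
  moreover have "v \<noteq> a" if "(u, v) \<in> F" for u v
    using that assms(2) by force
  moreover have "F \<subseteq> S \<times> S"
    using assms(1) by (simp add: linear_forest_def)
  ultimately show ?thesis
    by blast
qed

text \<open>Forbidding a as the first entry acts like one more forbidden succession,
  namely from an imaginary start symbol to a.\<close>
theorem card_avoiding_hd_ne:
  assumes "linear_forest S F" "a \<in> S" "a \<notin> snd ` F"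
  shows "int (card {xs \<in> permutations_of_set S. avoids F xs \<and> (xs \<noteq> [] \<longrightarrow> hd xs \<noteq> a)})
    = ie_count (card S) (Suc (card F))"
  using assms
proof (induction "card S" arbitrary: S F a)
  case 0
  then show ?case
    by (simp add: linear_forest_def)
next
  case (Suc n)
  let ?G = "Restr F (S - {a})"
  have S: "finite S" "F \<subseteq> S \<times> S" "card (S - {a}) = n"
    using Suc.prems Suc.hyps(2) by (auto simp: linear_forest_def)
  have forest': "linear_forest (S - {a}) ?G"
    using linear_forest_Restr[OF Suc.prems(1)] by blast
  have avoids_a: "avoids F (a # ys) \<longleftrightarrow> (ys \<noteq> [] \<longrightarrow> (a, hd ys) \<notin> F) \<and> avoids ?G ys"
    if "ys \<in> permutations_of_set (S - {a})" for ys
    using that avoids_Restr[of ys "S - {a}" F] by (simp add: avoids_Cons permutations_of_set_def)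
  have starting: "int (card {ys \<in> permutations_of_set (S - {a}). avoids F (a # ys)})
      = ie_count n (card F)"
  proof (cases "\<exists>b. (a, b) \<in> F")
    case True
    then obtain b where edge: "(a, b) \<in> F"
      by blast
    have G: "?G = F - {(a, b)}"
      using Suc.prems(1,3) edge by (rule Restr_Diff_source)
    have b_in: "b \<in> S - {a}"
      using S(2) edge linear_forest_irrefl[OF Suc.prems(1) edge] by auto
    have b_not_head: "b \<notin> snd ` ?G"
      using linear_forest_snd_eq[OF Suc.prems(1) edge] by auto
    have "{ys \<in> permutations_of_set (S - {a}). avoids F (a # ys)}
        = {ys \<in> permutations_of_set (S - {a}). avoids ?G ys \<and> (ys \<noteq> [] \<longrightarrow> hd ys \<noteq> b)}"
      using avoids_a linear_forest_fst_eq[OF Suc.prems(1) edge] edge by blast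
    moreover have "Suc (card ?G) = card F"
      using card_Suc_Diff1[OF linear_forest_finite[OF Suc.prems(1)] edge] G by simp
    ultimately show ?thesis
      using Suc.hyps(1)[OF S(3)[symmetric] forest' b_in b_not_head] S(3) by simp
  next
    case False
    then have "?G = F"
      using S(2) Suc.prems(3) by force
    then show ?thesis
      using avoids_a False card_avoiding[OF forest'] S(3) by (simp cong: conj_cong)
  qed
  show ?case
    using card_avoiding_split_hd[OF Suc.prems(2), of F] card_avoiding[OF Suc.prems(1)]
      starting Suc.hyps(2)[symmetric] by simp
qed

lemma permutes_Diff_singleton_iff:
  assumes "x \<in> S"
  shows "p permutes S \<and> p x = x \<longleftrightarrow> p permutes (S - {x})"
proof
  assume "p permutes S \<and> p x = x"
  then show "p permutes (S - {x})"
    by (auto intro: permutes_superset)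
next
  assume "p permutes (S - {x})"
  then show "p permutes S \<and> p x = x"
    by (auto intro: permutes_subset permutes_not_in)
qed

theorem card_permutes_no_fixpoint_on:
  assumes "finite S" "T \<subseteq> S"
  shows "int (card {p. p permutes S \<and> (\<forall>z\<in>T. p z \<noteq> z)}) = ie_count (card S) (card T)"
proof -
  have "finite T"
    using assms finite_subset by blast
  then show ?thesis
    using assms
  proof (induction T arbitrary: S rule: finite_induct)
    case empty
    then show ?case
      by (simp add: card_permutations)
  next
    case (insert x T)
    have x: "x \<in> S" and T: "T \<subseteq> S - {x}"
      using insert.prems insert.hyps by auto
    let ?A = "{p. p permutes S \<and> (\<forall>z\<in>insert x T. p z \<noteq> z)}"
    let ?B = "{p. p permutes (S - {x}) \<and> (\<forall>z\<in>T. p z \<noteq> z)}"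
    have "{p. p permutes S \<and> (\<forall>z\<in>T. p z \<noteq> z)} = ?A \<union> ?B" "?A \<inter> ?B = {}"
      using permutes_Diff_singleton_iff[OF x] by auto
    moreover have "finite ?A" "finite ?B"
      using finite_permutations[of S] finite_permutations[of "S - {x}"] insert.prems(1)
      by (auto intro: rev_finite_subset)
    ultimately have "card {p. p permutes S \<and> (\<forall>z\<in>T. p z \<noteq> z)} = card ?A + card ?B"
      by (simp add: card_Un_disjoint)
    then show ?case
      using insert.IH[of S] insert.IH[of "S - {x}"] insert.prems insert.hyps x T by simp
  qed
qed

lemma int_Der: "int (Der m) = ie_count m m"
  unfolding Der_def using card_permutes_no_fixpoint_on[of "{1..m}" "{1..m}"] by simp

definition cyclic_succ :: "nat \<Rightarrow> nat \<Rightarrow> nat" where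
  "cyclic_succ n k = (if k = n then 1 else Suc k)"

definition cyclic_successions :: "nat \<Rightarrow> (nat \<times> nat) set" where
  "cyclic_successions n = (\<lambda>k. (k, cyclic_succ n k)) ` {1..n}"

lemma cyclic_succ_in_range: "k \<in> {1..n} \<Longrightarrow> cyclic_succ n k \<in> {1..n}"
  by (auto simp: cyclic_succ_def)

lemma cyclic_succ_inj: "k \<in> {1..n} \<Longrightarrow> l \<in> {1..n} \<Longrightarrow> cyclic_succ n k = cyclic_succ n l \<Longrightarrow> k = l"
  by (cases "k = n"; cases "l = n") (auto simp: cyclic_succ_def)

lemma cyclic_succ_eq_iff:
  "k \<in> {1..n} \<Longrightarrow> i \<in> {1..n} \<Longrightarrow> cyclic_succ n k = i \<longleftrightarrow> k = (if i = 1 then n else i - 1)"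
  by (cases "k = n"; cases "i = 1") (auto simp: cyclic_succ_def)

lemma D_eq_avoids_cyclic_successions:
  assumes "1 \<le> n"
  shows "D n = {xs \<in> permutations_of_set {1..n}. avoids (cyclic_successions n) xs}"
proof -
  have "cyclic_successions n = (\<lambda>k. (k, Suc k)) ` {1..<n} \<union> {(n, 1)}"
    using assms by (force simp: cyclic_successions_def cyclic_succ_def)
  then have "avoids (cyclic_successions n) xs \<longleftrightarrow>
      (\<forall>k\<in>{1..<n}. \<not> contains_pattern xs k (Suc k)) \<and> \<not> contains_pattern xs n 1" for xs
    by (subst avoids_iff_singletons) (auto simp: contains_pattern_iff_not_avoids)
  then show ?thesis
    unfolding D_def arrangements_def permutations_of_set_def by blast
qed

context
  fixes n i :: nat
  assumes i: "i \<in> {1..n}"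
begin

lemma linear_forest_cyclic_successions_Restr:
  "linear_forest ({1..n} - {i}) (Restr (cyclic_successions n) ({1..n} - {i}))"
  unfolding linear_forest_def
proof (intro conjI)
  show "inj_on snd (Restr (cyclic_successions n) ({1..n} - {i}))"
    using cyclic_succ_inj by (auto simp: cyclic_successions_def inj_on_def)
  \<comment> \<open>deleting i cuts the cycle, so ranking in cyclic order from i is increasing along edges\<close>
  let ?r = "\<lambda>k. if i \<le> k then k - i else k + n - i"
  show "\<exists>r::nat \<Rightarrow> nat. \<forall>(u, v)\<in>Restr (cyclic_successions n) ({1..n} - {i}). r u < r v"
    using i by (intro exI[of _ ?r]) (auto simp: cyclic_successions_def cyclic_succ_def)
qed (auto simp: cyclic_successions_def inj_on_def)

lemma card_cyclic_successions_Restr: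
  assumes "2 \<le> n"
  shows "card (Restr (cyclic_successions n) ({1..n} - {i})) = n - 2"
proof -
  define p where "p = (if i = 1 then n else i - 1)"
  have p: "p \<in> {1..n}" "p \<noteq> i"
    using i assms by (auto simp: p_def)
  have "k \<noteq> i \<and> cyclic_succ n k \<noteq> i \<longleftrightarrow> k \<notin> {i, p}" if "k \<in> {1..n}" for k
    using cyclic_succ_eq_iff[OF that i] by (simp add: p_def)
  then have "{k \<in> {1..n}. k \<noteq> i \<and> cyclic_succ n k \<noteq> i} = {1..n} - {i, p}"
    by blast
  moreover have "Restr (cyclic_successions n) ({1..n} - {i})
      = (\<lambda>k. (k, cyclic_succ n k)) ` {k \<in> {1..n}. k \<noteq> i \<and> cyclic_succ n k \<noteq> i}"
    using cyclic_succ_in_range by (auto simp: cyclic_successions_def)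
  ultimately have "Restr (cyclic_successions n) ({1..n} - {i})
      = (\<lambda>k. (k, cyclic_succ n k)) ` ({1..n} - {i, p})"
    by simp
  moreover have "inj_on (\<lambda>k. (k, cyclic_succ n k)) ({1..n} - {i, p})"
    by (auto simp: inj_on_def)
  ultimately show ?thesis
    using i p by (simp add: card_image card_Diff_subset)
qed

lemma avoids_cyclic_successions_Cons:
  assumes "ys \<in> permutations_of_set ({1..n} - {i})"
  shows "avoids (cyclic_successions n) (i # ys) \<longleftrightarrow>
    avoids (Restr (cyclic_successions n) ({1..n} - {i})) ys \<and> (ys \<noteq> [] \<longrightarrow> hd ys \<noteq> cyclic_succ n i)"
proof -
  have "(i, v) \<in> cyclic_successions n \<longleftrightarrow> v = cyclic_succ n i" for v
    using i by (auto simp: cyclic_successions_def)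
  then show ?thesis
    using assms avoids_Restr[of ys "{1..n} - {i}" "cyclic_successions n"]
    by (auto simp: avoids_Cons permutations_of_set_def)
qed

lemma card_D_hd_eq:
  "card {xs \<in> D n. hd xs = i} = card {ys \<in> permutations_of_set ({1..n} - {i}).
     avoids (Restr (cyclic_successions n) ({1..n} - {i})) ys \<and> (ys \<noteq> [] \<longrightarrow> hd ys \<noteq> cyclic_succ n i)}"
proof -
  have "{xs \<in> D n. hd xs = i} = {xs \<in> permutations_of_set {1..n}.
      xs \<noteq> [] \<and> hd xs = i \<and> avoids (cyclic_successions n) xs}"
    using D_eq_avoids_cyclic_successions[of n] i by (auto simp: permutations_of_set_def)
  also have "card \<dots> = card {ys \<in> permutations_of_set ({1..n} - {i}).
      avoids (cyclic_successions n) (i # ys)}"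
    using i by (rule card_permutations_of_set_hd)
  finally show ?thesis
    using avoids_cyclic_successions_Cons by (simp cong: conj_cong)
qed

end

theorem corollary4p4:
  fixes n i :: nat
  assumes "n \<ge> 3" and "i \<in> {1..n}"
  shows "card {xs \<in> D n. hd xs = i} = Der (n - 1)"
proof -
  let ?S = "{1..n} - {i}"
  let ?G = "Restr (cyclic_successions n) ?S"
  note card_D_hd_eq[OF assms(2)]
  moreover have "int (card {ys \<in> permutations_of_set ?S.
      avoids ?G ys \<and> (ys \<noteq> [] \<longrightarrow> hd ys \<noteq> cyclic_succ n i)}) = ie_count (card ?S) (Suc (card ?G))"
  proof (rule card_avoiding_hd_ne)
    show "linear_forest ?S ?G"
      using assms(2) by (rule linear_forest_cyclic_successions_Restr)
    show "cyclic_succ n i \<in> ?S"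
      using assms by (auto simp: cyclic_succ_def)
    show "cyclic_succ n i \<notin> snd ` ?G"
      using assms cyclic_succ_inj by (auto simp: cyclic_successions_def)
  qed
  moreover have "card ?S = n - 1" "Suc (card ?G) = n - 1"
    using card_cyclic_successions_Restr[OF assms(2)] assms by auto
  ultimately have "int (card {xs \<in> D n. hd xs = i}) = ie_count (n - 1) (n - 1)"
    by metis
  then show ?thesis
    by (simp flip: int_Der)
qed

end
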